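(* Let $n>24$, $0<\epsilon<\frac13$, $\delta>0$, $s>0$, and $m=\epsilon^{-2}n^{1+\delta}$ (assumed to be an integer). Let $$A=\left\{y\in U^m:\ \left|\sum_{i=1}^n\frac{k_i(y)(k_i(y)-1)}{m(m-1)}\cdot\frac1{\|p\|^2}-1\right|\le 3\epsilon\right\}$$ and $C_s=\{x\in U^m: d_T(x,A)<s\}$. Then for every $x\in C_s$ there is $y\in A$ such that $$\left|\sum_{i=1}^n\frac{k_i(x)(k_i(x)-1)}{m(m-1)}-\sum_{i=1}^n\frac{k_i(y)(k_i(y)-1)}{m(m-1)}\right|\le \epsilon\,\|p\|^2\left(\frac{6s}{n^{\delta/2}}+\frac{5s^2\epsilon}{n^{\delta}}\right).$$
   Context: Standing setup: $U$ is a finite set (the key space) with a probability measure $q$; $T=\{1,\dots,n\}$; $h:U\to T$ is an arbitrary function. $p_i=\sum_{u\in h^{-1}(i)}q(u)$ and $\|p\|^2=\sum_{i=1}^n p_i^2$. For $x=(x_1,\dots,x_m)\in U^m$, $k_i(x)=|\{j: h(x_j)=i\}|$. Talagrand's convex distance: $d_T(x,A)=\sup\{\inf_{y\in A}\sum_{j=1}^m\alpha_j\mathbf 1(x_j\ne y_j)\ :\ \alpha\in\mathbb R^m,\ \sum_j\alpha_j^2\le 1\}$, where $\mathbf 1(x_j\ne y_j)$ is $1$ if $x_j\ne y_j$ and $0$ otherwise. *)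

theory Defs
  imports Complex_Main "HOL-Library.Extended_Real"
begin

definition words :: "'a set \<Rightarrow> nat \<Rightarrow> 'a list set" where
  "words U m = {x. length x = m \<and> set x \<subseteq> U}"

definition kcount :: "('a \<Rightarrow> nat) \<Rightarrow> nat \<Rightarrow> 'a list \<Rightarrow> nat" where
  "kcount h i x = card {j. j < length x \<and> h (x ! j) = i}"

definition pmass :: "'a set \<Rightarrow> ('a \<Rightarrow> real) \<Rightarrow> ('a \<Rightarrow> nat) \<Rightarrow> nat \<Rightarrow> real" where
  "pmass U q h i = (\<Sum>u\<in>{u\<in>U. h u = i}. q u)"

definition pnorm2 :: "'a set \<Rightarrow> ('a \<Rightarrow> real) \<Rightarrow> ('a \<Rightarrow> nat) \<Rightarrow> nat \<Rightarrow> real" where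
  "pnorm2 U q h n = (\<Sum>i=1..n. (pmass U q h i)^2)"

definition collstat :: "('a \<Rightarrow> nat) \<Rightarrow> nat \<Rightarrow> nat \<Rightarrow> 'a list \<Rightarrow> real" where
  "collstat h n m x =
     (\<Sum>i=1..n. real (kcount h i x) * (real (kcount h i x) - 1) / (real m * (real m - 1)))"

text \<open>Talagrand's convex distance, valued in the extended reals (so that the
  distance to the empty set is +infinity).\<close>
definition talagrand_dist :: "'a list \<Rightarrow> 'a list set \<Rightarrow> ereal" where
  "talagrand_dist x A =
     (SUP \<alpha> \<in> {\<alpha>::nat \<Rightarrow> real. (\<Sum>j<length x. (\<alpha> j)^2) \<le> 1}.
        INF y \<in> A. ereal (\<Sum>j<length x. \<alpha> j * (if x ! j \<noteq> y ! j then 1 else 0)))"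

end

theory Submission
  imports Defs "HOL-Analysis.Convex"
begin

(* Testing d_T(x, A) < s against the uniform weight vector alpha_j = 1 / sqrt m yields y in A
   that differs from x in t < s sqrt m positions. Changing t positions moves at most t units of mass
   between the counts k_i, so sum_i k_i^2 changes by at most 2 t ||k(y)|| + t^2, while
   sum_i k_i = m for both words; hence the collision statistics differ by that amount divided
   by m (m - 1). Membership of y in A gives ||k(y)||^2 <= 4 ||p||^2 m^2, and with
   ||p||^2 >= 1/n (Cauchy-Schwarz) and m = eps^-2 n^(1 + delta) this becomes the stated bound.
   Cauchy-Schwarz does not need q >= 0. *)

lemma sum_card_fibres:
  assumes "finite J" "finite I" "f ` J \<subseteq> I"
  shows "(\<Sum>i\<in>I. card {j\<in>J. f j = i}) = card J"
  using sum.group[OF assms, of "\<lambda>_. 1::nat"] by simp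

lemma sum_squares_perturbation_le:
  fixes a b c :: "'i \<Rightarrow> real"
  assumes I: "finite I" and nonneg: "\<forall>i\<in>I. 0 \<le> a i \<and> 0 \<le> b i \<and> 0 \<le> c i"
    and a_le: "sum a I \<le> t" and b_le: "sum b I \<le> t"
  shows "\<bar>(\<Sum>i\<in>I. (c i + a i)\<^sup>2) - (\<Sum>i\<in>I. (c i + b i)\<^sup>2)\<bar>
           \<le> 2 * t * sqrt (\<Sum>i\<in>I. (c i + b i)\<^sup>2) + t\<^sup>2"
proof -
  define V where "V = (\<Sum>i\<in>I. (c i + b i)\<^sup>2)"
  have "0 \<le> V" by (simp add: V_def sum_nonneg)
  have entry_le: "c i + b i \<le> sqrt V" if "i \<in> I" for i
  proof (rule real_le_rsqrt)
    show "(c i + b i)\<^sup>2 \<le> V"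
      unfolding V_def using that I by (intro member_le_sum) auto
  qed
  have weighted: "(\<Sum>i\<in>I. w i * (c i + b i)) \<le> t * sqrt V"
    if w: "\<forall>i\<in>I. 0 \<le> w i" "sum w I \<le> t" for w
  proof -
    have "(\<Sum>i\<in>I. w i * (c i + b i)) \<le> (\<Sum>i\<in>I. w i * sqrt V)"
      using w entry_le by (intro sum_mono mult_left_mono) auto
    also have "\<dots> = sum w I * sqrt V"
      by (simp add: sum_distrib_right)
    also have "\<dots> \<le> t * sqrt V"
      using w \<open>0 \<le> V\<close> by (intro mult_right_mono) auto
    finally show ?thesis .
  qed
  have "0 \<le> sum a I" using nonneg by (simp add: sum_nonneg)
  have "(\<Sum>i\<in>I. (a i)\<^sup>2) \<le> (\<Sum>i\<in>I. a i * sum a I)"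
  proof (rule sum_mono)
    fix i assume "i \<in> I"
    then have "a i \<le> sum a I" using nonneg I by (intro member_le_sum) auto
    with \<open>i \<in> I\<close> nonneg show "(a i)\<^sup>2 \<le> a i * sum a I"
      by (simp add: power2_eq_square mult_left_mono)
  qed
  also have "\<dots> = (sum a I)\<^sup>2"
    by (simp add: sum_distrib_right power2_eq_square)
  also have "\<dots> \<le> t\<^sup>2"
    using a_le \<open>0 \<le> sum a I\<close> by (rule power_mono)
  finally have a_sq: "(\<Sum>i\<in>I. (a i)\<^sup>2) \<le> t\<^sup>2" .
  have "(\<Sum>i\<in>I. (c i + a i)\<^sup>2) - V \<le> (\<Sum>i\<in>I. 2 * (a i * (c i + b i)) + (a i)\<^sup>2)"
    unfolding V_def sum_subtractf[symmetric]
  proof (rule sum_mono)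
    fix i assume "i \<in> I"
    with nonneg show "(c i + a i)\<^sup>2 - (c i + b i)\<^sup>2 \<le> 2 * (a i * (c i + b i)) + (a i)\<^sup>2"
      by (simp add: power2_eq_square algebra_simps)
  qed
  also have "\<dots> = 2 * (\<Sum>i\<in>I. a i * (c i + b i)) + (\<Sum>i\<in>I. (a i)\<^sup>2)"
    by (simp add: sum.distrib sum_distrib_left)
  also have "\<dots> \<le> 2 * t * sqrt V + t\<^sup>2"
    using weighted[of a] nonneg a_le a_sq by auto
  finally have up: "(\<Sum>i\<in>I. (c i + a i)\<^sup>2) - V \<le> 2 * t * sqrt V + t\<^sup>2" .
  have "V - (\<Sum>i\<in>I. (c i + a i)\<^sup>2) \<le> (\<Sum>i\<in>I. 2 * (b i * (c i + b i)))"
    unfolding V_def sum_subtractf[symmetric]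
  proof (rule sum_mono)
    fix i assume "i \<in> I"
    with nonneg show "(c i + b i)\<^sup>2 - (c i + a i)\<^sup>2 \<le> 2 * (b i * (c i + b i))"
      by (simp add: power2_eq_square algebra_simps)
  qed
  also have "\<dots> = 2 * (\<Sum>i\<in>I. b i * (c i + b i))"
    by (simp add: sum_distrib_left)
  also have "\<dots> \<le> 2 * t * sqrt V"
    using weighted[of b] nonneg b_le by auto
  finally have down: "V - (\<Sum>i\<in>I. (c i + a i)\<^sup>2) \<le> 2 * t * sqrt V" .
  show ?thesis
    unfolding V_def[symmetric] abs_le_iff using up down zero_le_power2[of t] by linarith
qed

lemma sum_squares_card_fibres_diff_le:
  fixes f g :: "'j \<Rightarrow> 'i"
  assumes J: "finite J" and I: "finite I" and f: "f ` J \<subseteq> I" and g: "g ` J \<subseteq> I"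
  defines "d \<equiv> real (card {j\<in>J. f j \<noteq> g j})"
  shows "\<bar>(\<Sum>i\<in>I. (real (card {j\<in>J. f j = i}))\<^sup>2) - (\<Sum>i\<in>I. (real (card {j\<in>J. g j = i}))\<^sup>2)\<bar>
           \<le> 2 * d * sqrt (\<Sum>i\<in>I. (real (card {j\<in>J. g j = i}))\<^sup>2) + d\<^sup>2"
proof -
  define D where "D = {j\<in>J. f j \<noteq> g j}"
  define c where "c i = real (card {j\<in>J - D. f j = i})" for i
  define a where "a i = real (card {j\<in>D. f j = i})" for i
  define b where "b i = real (card {j\<in>D. g j = i})" for i
  have "finite D" "D \<subseteq> J" using J by (auto simp: D_def)
  have split: "real (card {j\<in>J. F j = i}) = real (card {j\<in>J - D. F j = i}) + real (card {j\<in>D. F j = i})"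
    for F :: "'j \<Rightarrow> 'i" and i
  proof -
    have "{j\<in>J. F j = i} = {j\<in>J - D. F j = i} \<union> {j\<in>D. F j = i}"
      using \<open>D \<subseteq> J\<close> by auto
    then show ?thesis
      using J \<open>finite D\<close> by (simp add: card_Un_disjoint disjoint_iff)
  qed
  have agree: "{j\<in>J - D. g j = i} = {j\<in>J - D. f j = i}" for i
    by (auto simp: D_def)
  have fibres: "real (card {j\<in>J. f j = i}) = c i + a i" "real (card {j\<in>J. g j = i}) = c i + b i"
    for i unfolding a_def b_def c_def using split[of f i] split[of g i] agree[of i] by simp_all
  have "f ` D \<subseteq> I" "g ` D \<subseteq> I" using f g \<open>D \<subseteq> J\<close> by blast+
  then have "sum a I = card D" "sum b I = card D"
    unfolding a_def b_def by (simp_all flip: of_nat_sum add: sum_card_fibres[OF \<open>finite D\<close> I])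
  then show ?thesis
    using sum_squares_perturbation_le[OF I, of a b c "card D"]
    unfolding fibres d_def D_def[symmetric] by (simp add: a_def b_def c_def)
qed

definition hamming_dist :: "'a list \<Rightarrow> 'a list \<Rightarrow> nat" where
  "hamming_dist x y = card {j. j < length x \<and> x ! j \<noteq> y ! j}"

lemma talagrand_dist_less_imp_hamming_dist_less:
  assumes dist: "talagrand_dist x A < ereal s" and "x \<noteq> []"
  shows "\<exists>y\<in>A. real (hamming_dist x y) < s * sqrt (length x)"
proof -
  define m where "m = length x"
  have "0 < m" using \<open>x \<noteq> []\<close> by (simp add: m_def)
  define \<alpha> where "\<alpha> = (\<lambda>_::nat. 1 / sqrt m)"
  have "(\<Sum>j<m. (\<alpha> j)\<^sup>2) \<le> 1"
    using \<open>0 < m\<close> by (simp add: \<alpha>_def power_divide)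
  then have "(INF y\<in>A. ereal (\<Sum>j<m. \<alpha> j * (if x ! j \<noteq> y ! j then 1 else 0)))
      \<le> talagrand_dist x A"
    unfolding talagrand_dist_def m_def by (intro SUP_upper) simp
  then have "(INF y\<in>A. ereal (\<Sum>j<m. \<alpha> j * (if x ! j \<noteq> y ! j then 1 else 0))) < ereal s"
    using dist by (rule le_less_trans)
  then obtain y where "y \<in> A"
    and y: "(\<Sum>j<m. \<alpha> j * (if x ! j \<noteq> y ! j then 1 else 0)) < s"
    by (auto simp: INF_less_iff)
  have "(\<Sum>j<m. \<alpha> j * (if x ! j \<noteq> y ! j then 1 else 0))
      = (\<Sum>j<m. if x ! j \<noteq> y ! j then 1 / sqrt m else 0)"
    by (intro sum.cong) (auto simp: \<alpha>_def)
  also have "\<dots> = (\<Sum>j\<in>{j\<in>{..<m}. x ! j \<noteq> y ! j}. 1 / sqrt m)"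
    by (rule sum.inter_filter[symmetric]) simp
  also have "\<dots> = hamming_dist x y / sqrt m"
    by (simp add: hamming_dist_def m_def)
  finally have "(\<Sum>j<m. \<alpha> j * (if x ! j \<noteq> y ! j then 1 else 0)) = hamming_dist x y / sqrt m" .
  with y \<open>y \<in> A\<close> \<open>0 < m\<close> show ?thesis
    by (auto simp: m_def divide_less_eq)
qed

lemma sum_kcount:
  assumes "x \<in> words U m" and "h ` U \<subseteq> {1..n}"
  shows "(\<Sum>i=1..n. kcount h i x) = m"
proof -
  have "x ! j \<in> U" if "j < m" for j
    using assms(1) that nth_mem by (fastforce simp: words_def)
  then have "(\<lambda>j. h (x ! j)) ` {..<m} \<subseteq> {1..n}"
    using assms(2) by blast
  then show ?thesis
    using sum_card_fibres[of "{..<m}" "{1..n}"] assms(1) by (simp add: kcount_def words_def)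
qed

lemma collstat_eq_sum_squares:
  assumes "x \<in> words U m" and "h ` U \<subseteq> {1..n}"
  shows "collstat h n m x = ((\<Sum>i=1..n. (real (kcount h i x))\<^sup>2) - m) / (m * (real m - 1))"
proof -
  have "(\<Sum>i=1..n. real (kcount h i x)) = m"
    using sum_kcount[OF assms] by (simp flip: of_nat_sum)
  then show ?thesis
    unfolding collstat_def
    by (simp add: sum_divide_distrib[symmetric] sum_subtractf power2_eq_square algebra_simps)
qed

lemma sum_squares_kcount_diff_le:
  assumes x: "x \<in> words U m" and y: "y \<in> words U m" and h: "h ` U \<subseteq> {1..n}"
  defines "d \<equiv> real (hamming_dist x y)"
  shows "\<bar>(\<Sum>i=1..n. (real (kcount h i x))\<^sup>2) - (\<Sum>i=1..n. (real (kcount h i y))\<^sup>2)\<bar>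
           \<le> 2 * d * sqrt (\<Sum>i=1..n. (real (kcount h i y))\<^sup>2) + d\<^sup>2"
proof -
  have "length x = m" "length y = m" using x y by (auto simp: words_def)
  have "(\<lambda>j. h (z ! j)) ` {..<m} \<subseteq> {1..n}" if "z \<in> words U m" for z
    using that h nth_mem by (fastforce simp: words_def)
  then have "\<bar>(\<Sum>i=1..n. (real (kcount h i x))\<^sup>2) - (\<Sum>i=1..n. (real (kcount h i y))\<^sup>2)\<bar>
      \<le> 2 * real (card {j\<in>{..<m}. h (x ! j) \<noteq> h (y ! j)}) * sqrt (\<Sum>i=1..n. (real (kcount h i y))\<^sup>2)
         + (real (card {j\<in>{..<m}. h (x ! j) \<noteq> h (y ! j)}))\<^sup>2"
    using sum_squares_card_fibres_diff_le[of "{..<m}" "{1..n}" "\<lambda>j. h (x ! j)" "\<lambda>j. h (y ! j)"] x y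
    by (simp add: kcount_def \<open>length x = m\<close> \<open>length y = m\<close>)
  also have "\<dots> \<le> 2 * d * sqrt (\<Sum>i=1..n. (real (kcount h i y))\<^sup>2) + d\<^sup>2"
  proof -
    have "card {j\<in>{..<m}. h (x ! j) \<noteq> h (y ! j)} \<le> hamming_dist x y"
      unfolding hamming_dist_def \<open>length x = m\<close> by (rule card_mono) auto
    then show ?thesis
      unfolding d_def by (intro add_mono mult_right_mono power_mono) (auto simp: sum_nonneg)
  qed
  finally show ?thesis .
qed

lemma one_le_pnorm2_mult_n:
  assumes "finite U" and "sum q U = 1" and "h ` U \<subseteq> {1..n}"
  shows "1 \<le> pnorm2 U q h n * n"
proof -
  have "(\<Sum>i=1..n. pmass U q h i) = 1"
    using sum.group[of U "{1..n}" h q] assms by (simp add: pmass_def)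
  then show ?thesis
    using sum_squared_le_sum_of_squares[of "pmass U q h" "{1..n}"] by (simp add: pnorm2_def)
qed

lemma sum_squares_kcount_le:
  assumes y: "y \<in> words U m" and h: "h ` U \<subseteq> {1..n}"
    and coll: "collstat h n m y \<le> 2 * P" and Pm: "1 \<le> P * m" and m: "2 \<le> m"
  shows "(\<Sum>i=1..n. (real (kcount h i y))\<^sup>2) \<le> 4 * P * m\<^sup>2"
proof -
  define K where "K = (\<Sum>i=1..n. (real (kcount h i y))\<^sup>2)"
  have "0 < real m * (real m - 1)" using m by simp
  then have "K - m \<le> 2 * P * (m * (real m - 1))"
    using coll collstat_eq_sum_squares[OF y h] by (simp add: K_def pos_divide_le_eq)
  moreover have "m \<le> P * m\<^sup>2" and "0 \<le> P * m"
    using Pm mult_left_mono[OF Pm, of m] by (simp_all add: power2_eq_square algebra_simps)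
  ultimately show ?thesis
    unfolding K_def[symmetric] by (simp add: power2_eq_square algebra_simps)
qed

lemma collision_diff_bound_arith:
  fixes \<Delta> t s K P m n :: real
  assumes diff: "\<bar>\<Delta>\<bar> \<le> 2 * t * sqrt K + t\<^sup>2" and t: "0 \<le> t" "t < s * sqrt m"
    and K: "0 \<le> K" "K \<le> 4 * P * m\<^sup>2" and Pn: "1 \<le> P * n" and n: "0 < n" and m: "9 \<le> m"
  shows "\<bar>\<Delta>\<bar> / (m * (m - 1)) \<le> P * (6 * s * sqrt (n / m) + 5 * s\<^sup>2 * (n / m))"
proof -
  define X where "X = P * (6 * s * sqrt (n / m) + 5 * s\<^sup>2 * (n / m))"
  have "0 < P * n" using Pn by linarith
  then have "0 < P" using n zero_less_mult_pos2 by blast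
  have "0 < s * sqrt m" using t by linarith
  then have "0 < s" using m zero_less_mult_pos2[of s "sqrt m"] by simp
  have "0 \<le> X" using \<open>0 < P\<close> \<open>0 < s\<close> n m by (simp add: X_def)
  have "sqrt K \<le> 2 * sqrt P * m"
    using K \<open>0 < P\<close> m by (intro real_le_lsqrt) (auto simp: power_mult_distrib)
  then have "t * sqrt K \<le> s * sqrt m * (2 * sqrt P * m)"
    using t K by (intro mult_mono) auto
  moreover have "t\<^sup>2 \<le> s\<^sup>2 * m"
    using power_mono[OF less_imp_le[OF t(2)] t(1), of 2] m by (simp add: power_mult_distrib)
  ultimately have "\<bar>\<Delta>\<bar> \<le> m * (4 * s * sqrt P * sqrt m + s\<^sup>2)"
    using diff by (simp add: algebra_simps)
  also have "\<dots> \<le> m * ((8 / 9) * m * X)"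
  proof (intro mult_left_mono)
    have "P * sqrt n = sqrt P * sqrt (P * n)"
      using \<open>0 < P\<close> by (simp add: real_sqrt_mult mult.assoc[symmetric])
    then have "sqrt P \<le> P * sqrt n"
      using real_sqrt_ge_one[OF Pn] \<open>0 < P\<close> by (simp add: mult_le_cancel_left1)
    then have "4 * sqrt P \<le> (16 / 3) * (P * sqrt n)"
      using real_sqrt_gt_zero[OF \<open>0 < P\<close>] by linarith
    from mult_right_mono[OF this, of "s * sqrt m"]
    have "4 * s * sqrt P * sqrt m \<le> (16 / 3) * s * (P * sqrt n) * sqrt m"
      using \<open>0 < s\<close> m by (simp add: mult_ac)
    moreover have "s\<^sup>2 * 1 \<le> s\<^sup>2 * (P * n)"
      using Pn by (intro mult_left_mono) auto
    moreover have "(8 / 9) * m * X = (16 / 3) * s * (P * sqrt n) * sqrt m + (40 / 9) * (s\<^sup>2 * (P * n))"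
    proof -
      have "m * sqrt (n / m) = sqrt n * sqrt m"
        using m by (simp add: real_sqrt_divide field_simps)
      moreover have "m * (n / m) = n" using m by simp
      ultimately show ?thesis using m by (simp add: X_def algebra_simps)
    qed
    ultimately show "4 * s * sqrt P * sqrt m + s\<^sup>2 \<le> (8 / 9) * m * X"
      using zero_le_power2[of s] by linarith
  qed (use m in simp)
  also have "\<dots> \<le> m * ((m - 1) * X)"
    using m \<open>0 \<le> X\<close> by (intro mult_left_mono mult_right_mono) auto
  finally show ?thesis
    unfolding X_def[symmetric] using m by (simp add: pos_divide_le_eq mult_ac)
qed

lemma collstat_diff_le:
  assumes x: "x \<in> words U m" and y: "y \<in> words U m" and h: "h ` U \<subseteq> {1..n}"
    and ham: "real (hamming_dist x y) < s * sqrt m"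
    and coll: "collstat h n m y \<le> 2 * P" and Pn: "1 \<le> P * n" and "9 * n < m"
  shows "\<bar>collstat h n m x - collstat h n m y\<bar> \<le> P * (6 * s * sqrt (n / m) + 5 * s\<^sup>2 * (n / m))"
proof -
  have "0 < n" using Pn by (cases n) auto
  then have "0 < P" using Pn zero_less_mult_pos2[of P "real n"] by simp
  have "P * n \<le> P * m" using \<open>0 < P\<close> \<open>9 * n < m\<close> by (intro mult_left_mono) auto
  with Pn have "1 \<le> P * m" by linarith
  then have K: "(\<Sum>i=1..n. (real (kcount h i y))\<^sup>2) \<le> 4 * P * (real m)\<^sup>2"
    using sum_squares_kcount_le[OF y h coll] \<open>9 * n < m\<close> \<open>0 < n\<close> by simp
  have "\<bar>collstat h n m x - collstat h n m y\<bar>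
      = \<bar>(\<Sum>i=1..n. (real (kcount h i x))\<^sup>2) - (\<Sum>i=1..n. (real (kcount h i y))\<^sup>2)\<bar>
          / (m * (real m - 1))"
    using \<open>9 * n < m\<close>
    by (simp add: collstat_eq_sum_squares[OF x h] collstat_eq_sum_squares[OF y h]
        flip: diff_divide_distrib)
  also have "\<dots> \<le> P * (6 * s * sqrt (n / m) + 5 * s\<^sup>2 * (n / m))"
    using \<open>9 * n < m\<close> \<open>0 < n\<close>
    by (intro collision_diff_bound_arith[OF sum_squares_kcount_diff_le[OF x y h] _ ham _ K Pn])
      (auto simp: sum_nonneg)
  finally show ?thesis .
qed

lemma sample_size_bound_eq:
  fixes \<epsilon> \<delta> :: real
  assumes m_def: "real m = \<epsilon> powr (-2) * real n powr (1 + \<delta>)" and "0 < \<epsilon>" and "0 < n"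
  shows "P * (6 * s * sqrt (n / m) + 5 * s\<^sup>2 * (n / m))
    = \<epsilon> * P * (6 * s / real n powr (\<delta> / 2) + 5 * s\<^sup>2 * \<epsilon> / real n powr \<delta>)"
proof -
  have "real m = real n * real n powr \<delta> / \<epsilon>\<^sup>2"
    using assms by (simp add: powr_neg_numeral powr_mult_base)
  then have ratio: "real n / real m = \<epsilon>\<^sup>2 / real n powr \<delta>"
    using assms by simp
  then have sqrt_ratio: "sqrt (real n / real m) = \<epsilon> / real n powr (\<delta> / 2)"
    using assms by (simp add: real_sqrt_divide powr_half_sqrt_powr)
  show ?thesis
    unfolding sqrt_ratio unfolding ratio using assms by (simp add: field_simps power2_eq_square)
qed

lemma sample_size_gt:
  fixes \<epsilon> \<delta> :: real
  assumes m_def: "real m = \<epsilon> powr (-2) * real n powr (1 + \<delta>)"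
    and "0 < \<epsilon>" "\<epsilon> < 1 / 3" "0 \<le> \<delta>" "1 \<le> n"
  shows "9 * n < m"
proof -
  have "9 < 1 / \<epsilon>\<^sup>2"
    using assms power_strict_mono[of \<epsilon> "1/3" 2] by (simp add: field_simps)
  then have "9 * real n < 1 / \<epsilon>\<^sup>2 * real n"
    using assms by (intro mult_strict_right_mono) auto
  also have "\<dots> \<le> 1 / \<epsilon>\<^sup>2 * real n powr (1 + \<delta>)"
    using assms powr_mono[of 1 "1 + \<delta>" "real n"] by (intro mult_left_mono) auto
  finally show ?thesis
    using m_def \<open>0 < \<epsilon>\<close> by (simp add: powr_neg_numeral)
qed

theorem lemma4:
  fixes U :: "'a set" and q :: "'a \<Rightarrow> real" and h :: "'a \<Rightarrow> nat"
    and n m :: nat and \<epsilon> \<delta> s :: real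
  assumes finU: "finite U"
    and q_nonneg: "\<forall>u\<in>U. 0 \<le> q u"
    and q_prob: "(\<Sum>u\<in>U. q u) = 1"
    and h_range: "\<forall>u\<in>U. h u \<in> {1..n}"
    and n_gt: "n > 24"
    and eps_pos: "0 < \<epsilon>" and eps_lt: "\<epsilon> < 1/3"
    and delta_pos: "\<delta> > 0"
    and s_pos: "s > 0"
    and m_def: "real m = \<epsilon> powr (-2) * real n powr (1 + \<delta>)"
  defines "A \<equiv> {y \<in> words U m.
                 \<bar>collstat h n m y * (1 / pnorm2 U q h n) - 1\<bar> \<le> 3 * \<epsilon>}"
  shows "\<forall>x \<in> {x \<in> words U m. talagrand_dist x A < ereal s}.
           \<exists>y \<in> A. \<bar>collstat h n m x - collstat h n m y\<bar>
             \<le> \<epsilon> * pnorm2 U q h n *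
                 (6 * s / real n powr (\<delta> / 2) + 5 * s^2 * \<epsilon> / real n powr \<delta>)"
proof
  fix x assume "x \<in> {x \<in> words U m. talagrand_dist x A < ereal s}"
  then have x: "x \<in> words U m" and dist: "talagrand_dist x A < ereal s" by auto
  define P where "P = pnorm2 U q h n"
  have h: "h ` U \<subseteq> {1..n}" using h_range by auto
  have "0 < n" using n_gt by simp
  have "9 * n < m" using sample_size_gt[OF m_def eps_pos eps_lt] delta_pos n_gt by simp
  have Pn: "1 \<le> P * n" using one_le_pnorm2_mult_n[OF finU q_prob h] by (simp add: P_def)
  then have "0 < P" using \<open>0 < n\<close> zero_less_mult_pos2[of P "real n"] by simp
  have "x \<noteq> []" using x \<open>9 * n < m\<close> by (auto simp: words_def)
  then obtain y where "y \<in> A" and ham: "real (hamming_dist x y) < s * sqrt m"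
    using talagrand_dist_less_imp_hamming_dist_less[OF dist] x by (auto simp: words_def)
  then have y: "y \<in> words U m" and "\<bar>collstat h n m y * (1 / P) - 1\<bar> \<le> 3 * \<epsilon>"
    by (auto simp: A_def P_def)
  then have "collstat h n m y \<le> (1 + 3 * \<epsilon>) * P"
    using \<open>0 < P\<close> by (simp add: abs_le_iff field_simps)
  also have "\<dots> \<le> 2 * P"
    using eps_lt \<open>0 < P\<close> by (intro mult_right_mono) auto
  finally have "\<bar>collstat h n m x - collstat h n m y\<bar> \<le> P * (6 * s * sqrt (n / m) + 5 * s\<^sup>2 * (n / m))"
    using collstat_diff_le[OF x y h ham _ Pn \<open>9 * n < m\<close>] by blast
  also have "\<dots> = \<epsilon> * P * (6 * s / real n powr (\<delta> / 2) + 5 * s\<^sup>2 * \<epsilon> / real n powr \<delta>)"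
    by (rule sample_size_bound_eq[OF m_def eps_pos \<open>0 < n\<close>])
  finally show "\<exists>y \<in> A. \<bar>collstat h n m x - collstat h n m y\<bar>
      \<le> \<epsilon> * pnorm2 U q h n * (6 * s / real n powr (\<delta> / 2) + 5 * s^2 * \<epsilon> / real n powr \<delta>)"
    using \<open>y \<in> A\<close> unfolding P_def by blast
qed

end
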